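(* For any odd prime $p$, any integer $\alpha\ge1$ and any integer $n\ge0$, \[ b_4\!\left(p^{2\alpha}n+\frac{(8i+p)p^{2\alpha-1}-1}{8}\right)\equiv 0 \pmod 2 \] for each $i=1,2,\ldots,p-1$.
   Context: For a positive integer $\ell$, $b_\ell(n)$ denotes the number of partitions of $n$ having no part divisible by $\ell$. *)

theory Defs
  imports Main "HOL-Library.Multiset" "HOL-Computational_Algebra.Primes"
begin

definition partitions_no_part_dvd :: "nat \<Rightarrow> nat \<Rightarrow> nat multiset set" where
  "partitions_no_part_dvd l n =
     {M. (\<forall>x\<in>#M. 0 < x \<and> \<not> l dvd x) \<and> sum_mset M = n}"

definition b :: "nat \<Rightarrow> nat \<Rightarrow> nat" where
  "b l n = card (partitions_no_part_dvd l n)"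

end

theory Submission
  imports Defs "HOL-Computational_Algebra.Formal_Power_Series" "HOL-Library.Z2"
begin

text \<open>
  Over GF(2) the generating function prod_{4 not dvd k} 1/(1 - q^k) of b_4 equals
  prod_k (1 + q^(4k)) / prod_k (1 + q^k), and since (1 + q^k)^2 = 1 + q^(2k) there,
  1 / prod_k (1 + q^k) = prod_{k odd} (1 + q^k). By Jacobi's triple product identity
  prod_{k odd} (1 + q^k) * prod_k (1 - q^(4k)) = sum_{m in Z} q^(2m^2 - m), so b_4(N) is odd
  only if 8N + 1 = (4m - 1)^2 is a square. For the arguments N in the theorem,
  8N + 1 = p^(2 alpha - 1) (8pn + 8i + p) where p does not divide the second factor, and this
  is not a square because p divides it to an odd power.

  All power series identities are proved as congruences modulo X^(N+1), which involve only
  finite products; the triple product identity is used in the finite form that follows from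
  Rothe's q-binomial theorem.
\<close>

unbundle fps_syntax

section \<open>Congruences of power series modulo a power of X\<close>

definition fps_cong :: "nat \<Rightarrow> 'a::comm_ring_1 fps \<Rightarrow> 'a fps \<Rightarrow> bool" where
  "fps_cong n f g \<longleftrightarrow> fps_X ^ Suc n dvd f - g"

lemma fps_cong_refl [simp]: "fps_cong n f f"
  by (simp add: fps_cong_def)

lemma fps_cong_sym: "fps_cong n f g \<Longrightarrow> fps_cong n g f"
  unfolding fps_cong_def by (metis dvd_minus_iff minus_diff_eq)

lemma fps_cong_trans: "fps_cong n f g \<Longrightarrow> fps_cong n g h \<Longrightarrow> fps_cong n f h"
proof -
  assume "fps_cong n f g" "fps_cong n g h"
  moreover have "f - h = (f - g) + (g - h)"
    by simp
  ultimately show ?thesis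
    unfolding fps_cong_def by (metis dvd_add)
qed

lemma fps_cong_mult:
  assumes "fps_cong n f f'" "fps_cong n g g'"
  shows "fps_cong n (f * g) (f' * g')"
proof -
  have "f * g - f' * g' = f * (g - g') + (f - f') * g'"
    by (simp add: algebra_simps)
  with assms show ?thesis
    unfolding fps_cong_def by (metis dvd_add dvd_mult dvd_mult2)
qed

lemma fps_cong_prod:
  "finite A \<Longrightarrow> (\<And>i. i \<in> A \<Longrightarrow> fps_cong n (f i) (g i)) \<Longrightarrow>
     fps_cong n (\<Prod>i\<in>A. f i) (\<Prod>i\<in>A. g i)"
  by (induction A rule: finite_induct) (simp_all add: fps_cong_mult)

lemma fps_cong_prod_subset:
  assumes "finite A" "B \<subseteq> A" "\<And>i. i \<in> A - B \<Longrightarrow> fps_cong n (f i) 1"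
  shows "fps_cong n (\<Prod>i\<in>A. f i) (\<Prod>i\<in>B. f i)"
proof -
  have "fps_cong n ((\<Prod>i\<in>A - B. f i) * (\<Prod>i\<in>B. f i)) ((\<Prod>i\<in>A - B. 1) * (\<Prod>i\<in>B. f i))"
    using assms finite_subset[OF assms(2,1)] by (intro fps_cong_mult[OF fps_cong_prod fps_cong_refl]) auto
  then show ?thesis
    by (simp only: prod.subset_diff[OF assms(2,1)] prod.neutral_const mult_1)
qed

lemma fps_cong_nth:
  assumes "fps_cong n f g" "i \<le> n"
  shows "f $ i = g $ i"
proof -
  obtain h where h: "f - g = fps_X ^ Suc n * h"
    using assms(1) unfolding fps_cong_def by (auto elim: dvdE)
  have "(f - g) $ i = 0"
    unfolding h fps_X_power_mult_nth using assms(2) by simp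
  then show ?thesis
    by simp
qed

lemma fps_cong_mult_cancel_right:
  fixes f g e :: "'a::field fps"
  assumes "fps_cong n (f * e) (g * e)" "e $ 0 \<noteq> 0"
  shows "fps_cong n f g"
proof -
  have "(f * e - g * e) * inverse e = (f - g) * (e * inverse e)"
    by (simp add: algebra_simps)
  then have "f - g = (f * e - g * e) * inverse e"
    using inverse_mult_eq_1'[OF assms(2)] by simp
  with assms(1) show ?thesis
    unfolding fps_cong_def by (metis dvd_mult2)
qed

lemma fps_cong_one_plus_X_power: "n < e \<Longrightarrow> fps_cong n (1 + fps_X ^ e) 1"
  unfolding fps_cong_def using le_imp_power_dvd[of "Suc n" e] by simp

lemma fps_cong_one_minus_X_power: "n < e \<Longrightarrow> fps_cong n (1 - fps_X ^ e) 1"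
  unfolding fps_cong_def using le_imp_power_dvd[of "Suc n" e] by simp

lemma fps_X_power_mult_left_cancel:
  fixes f g :: "'a::comm_ring_1 fps"
  assumes "fps_X ^ a * f = fps_X ^ a * g"
  shows "f = g"
proof (rule fps_ext)
  fix i
  show "f $ i = g $ i"
    using arg_cong[OF assms, of "\<lambda>h. h $ (i + a)"] by (simp add: fps_X_power_mult_nth)
qed

definition distinct_parts_fps :: "nat set \<Rightarrow> 'a::comm_ring_1 fps" where
  "distinct_parts_fps A = (\<Prod>k\<in>A. 1 + fps_X ^ k)"

lemma distinct_parts_fps_union:
  "finite A \<Longrightarrow> finite B \<Longrightarrow> A \<inter> B = {} \<Longrightarrow>
     distinct_parts_fps (A \<union> B) = distinct_parts_fps A * distinct_parts_fps B"
  unfolding distinct_parts_fps_def by (rule prod.union_disjoint)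

lemma distinct_parts_fps_cong_subset:
  assumes "finite A" "B \<subseteq> A" "\<And>k. k \<in> A - B \<Longrightarrow> n < k"
  shows "fps_cong n (distinct_parts_fps A) (distinct_parts_fps B)"
  unfolding distinct_parts_fps_def
  using assms by (intro fps_cong_prod_subset fps_cong_one_plus_X_power) auto

lemma distinct_parts_fps_nth_0: "0 \<notin> A \<Longrightarrow> distinct_parts_fps A $ 0 = 1"
  unfolding distinct_parts_fps_def
proof (induction A rule: infinite_finite_induct)
  case (insert k A)
  then show ?case by (simp add: fps_X_power_iff)
qed simp_all

lemma bit_fps_uminus [simp]: "- (f :: bit fps) = f"
  by (simp add: fps_eq_iff)

lemma bit_fps_diff: "(f :: bit fps) - g = f + g"
  by (simp add: diff_conv_add_uminus)

lemma distinct_parts_fps_square_bit: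
  "distinct_parts_fps A * distinct_parts_fps A =
     (distinct_parts_fps ((*) 2 ` A) :: bit fps)"
proof -
  have "x + x = (0 :: bit)" for x
    by (cases x) simp_all
  then have double: "a + a = (0 :: bit fps)" for a
    by (intro fps_ext) (simp only: fps_add_nth fps_zero_nth)
  have square: "(1 + fps_X ^ k) * (1 + fps_X ^ k) = (1 + fps_X ^ (2 * k) :: bit fps)" for k
  proof -
    have "(1 + fps_X ^ k) * (1 + fps_X ^ k) = 1 + (fps_X ^ k + fps_X ^ k) + (fps_X ^ k * fps_X ^ k :: bit fps)"
      by (simp add: algebra_simps)
    also have "\<dots> = 1 + fps_X ^ (2 * k)"
      by (simp only: double add_0_right power_add[symmetric] mult_2)
    finally show ?thesis .
  qed
  show ?thesis
    unfolding distinct_parts_fps_def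
    by (simp add: prod.distrib[symmetric] square prod.reindex inj_on_def)
qed

section \<open>Partitions with parts in a given set\<close>

definition partitions_in :: "nat set \<Rightarrow> nat \<Rightarrow> nat multiset set" where
  "partitions_in K n = {M. set_mset M \<subseteq> K \<and> sum_mset M = n}"

definition fps_geometric :: "nat \<Rightarrow> 'a::comm_semiring_1 fps" where
  "fps_geometric k = Abs_fps (\<lambda>j. of_bool (k dvd j))"

lemma fps_geometric_mult_nth:
  fixes f :: "'a::comm_semiring_1 fps"
  assumes "0 < k"
  shows "(fps_geometric k * f) $ n = (\<Sum>j\<le>n div k. f $ (n - j * k))"
proof -
  have "(fps_geometric k * f) $ n = (\<Sum>i\<in>{i\<in>{0..n}. k dvd i}. f $ (n - i))"
    by (simp add: fps_mult_nth fps_geometric_def Int_def)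
  also have "{i\<in>{0..n}. k dvd i} = (\<lambda>j. j * k) ` {..n div k}"
  proof (intro set_eqI iffI)
    fix i assume "i \<in> {i\<in>{0..n}. k dvd i}"
    then obtain j where "i = j * k" "j * k \<le> n"
      by (metis (no_types, lifting) atLeastAtMost_iff dvd_def mem_Collect_eq mult.commute)
    with assms show "i \<in> (\<lambda>j. j * k) ` {..n div k}"
      by (auto simp: less_eq_div_iff_mult_less_eq)
  qed (use assms in \<open>auto simp: less_eq_div_iff_mult_less_eq\<close>)
  also have "(\<Sum>i\<in>(\<lambda>j. j * k) ` {..n div k}. f $ (n - i)) = (\<Sum>j\<le>n div k. f $ (n - j * k))"
    using assms by (subst sum.reindex) (auto simp: inj_on_def)
  finally show ?thesis .
qed

lemma fps_geometric_times_one_minus_X_power: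
  assumes "0 < k"
  shows "fps_geometric k * (1 - fps_X ^ k) = (1 :: 'a::comm_ring_1 fps)"
proof (rule fps_ext)
  fix j
  have "(fps_geometric k * (1 - fps_X ^ k) :: 'a fps) $ j =
      fps_geometric k $ j - (if j < k then 0 else fps_geometric k $ (j - k))"
    by (simp only: right_diff_distrib mult_1_right fps_sub_nth fps_X_power_mult_right_nth)
  also have "\<dots> = (1 :: 'a fps) $ j"
    using assms by (auto simp: fps_geometric_def dvd_minus_self dest: dvd_imp_le)
  finally show "(fps_geometric k * (1 - fps_X ^ k)) $ j = (1 :: 'a fps) $ j" .
qed

lemma partitions_in_empty: "partitions_in {} n = (if n = 0 then {{#}} else {})"
  by (auto simp: partitions_in_def)

lemma partitions_in_insert:
  assumes "k \<notin> K" "0 < k"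
  shows "partitions_in (insert k K) n =
    (\<Union>j\<le>n div k. (\<lambda>M. M + replicate_mset j k) ` partitions_in K (n - j * k))"
proof (intro set_eqI iffI)
  fix M assume "M \<in> partitions_in (insert k K) n"
  then have M: "set_mset M \<subseteq> insert k K" "sum_mset M = n"
    by (auto simp: partitions_in_def)
  define j where "j = count M k"
  define M' where "M' = filter_mset (\<lambda>x. x \<noteq> k) M"
  have split: "M = M' + replicate_mset j k"
    unfolding M'_def j_def by (metis add.commute filter_eq_replicate_mset multiset_partition)
  have "sum_mset M = sum_mset M' + j * k"
    by (subst split) simp
  then have "j * k \<le> n" "sum_mset M' = n - j * k"
    using M(2) by auto
  moreover have "set_mset M' \<subseteq> K"
    using M(1) unfolding M'_def by auto
  ultimately have "j \<le> n div k" "M' \<in> partitions_in K (n - j * k)"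
    using assms(2) by (simp_all add: partitions_in_def less_eq_div_iff_mult_less_eq)
  with split show "M \<in> (\<Union>j\<le>n div k. (\<lambda>M. M + replicate_mset j k) ` partitions_in K (n - j * k))"
    by blast
next
  fix M assume "M \<in> (\<Union>j\<le>n div k. (\<lambda>M. M + replicate_mset j k) ` partitions_in K (n - j * k))"
  then obtain j M' where "j \<le> n div k" "M' \<in> partitions_in K (n - j * k)"
    "M = M' + replicate_mset j k"
    by auto
  moreover have "j * k \<le> n"
    using \<open>j \<le> n div k\<close> assms(2) by (simp add: less_eq_div_iff_mult_less_eq)
  ultimately show "M \<in> partitions_in (insert k K) n"
    by (auto simp: partitions_in_def)
qed

lemma partitions_in_generating_function:
  assumes "finite K" "0 \<notin> K"
  shows "finite (partitions_in K n) \<and>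
    of_nat (card (partitions_in K n)) = (\<Prod>k\<in>K. fps_geometric k :: 'a::comm_semiring_1 fps) $ n"
  using assms
proof (induction K arbitrary: n rule: finite_induct)
  case empty
  then show ?case by (simp add: partitions_in_empty)
next
  case (insert k K)
  then have k: "0 < k" and IH: "\<And>m. finite (partitions_in K m) \<and>
      of_nat (card (partitions_in K m)) = (\<Prod>k\<in>K. fps_geometric k :: 'a fps) $ m"
    by auto
  define P where "P j = (\<lambda>M. M + replicate_mset j k) ` partitions_in K (n - j * k)" for j
  have disjoint: "P i \<inter> P j = {}" if "i \<noteq> j" for i j
  proof -
    have "count M k = 0" if "M \<in> partitions_in K m" for M m
      using that insert(2) by (auto simp: partitions_in_def count_eq_zero_iff)
    then have "count M k = j" if "M \<in> P j" for M j
      using that unfolding P_def by auto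
    with \<open>i \<noteq> j\<close> show ?thesis
      by blast
  qed
  have finite_P: "finite (P j)" for j
    using IH unfolding P_def by simp
  have card_P: "card (P j) = card (partitions_in K (n - j * k))" for j
    unfolding P_def by (rule card_image) (auto simp: inj_on_def)
  have split: "partitions_in (insert k K) n = (\<Union>j\<le>n div k. P j)"
    unfolding P_def by (rule partitions_in_insert[OF insert(2) k])
  have finite: "finite (partitions_in (insert k K) n)"
    unfolding split using finite_P by blast
  have "card (partitions_in (insert k K) n) = (\<Sum>j\<le>n div k. card (P j))"
    unfolding split using finite_P disjoint by (intro card_UN_disjoint) auto
  then have "of_nat (card (partitions_in (insert k K) n)) =
      (\<Sum>j\<le>n div k. of_nat (card (partitions_in K (n - j * k))) :: 'a)"
    by (simp add: card_P)
  also have "\<dots> = (\<Sum>j\<le>n div k. (\<Prod>k\<in>K. fps_geometric k :: 'a fps) $ (n - j * k))"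
    using IH by simp
  also have "\<dots> = (fps_geometric k * (\<Prod>k\<in>K. fps_geometric k) :: 'a fps) $ n"
    by (simp only: fps_geometric_mult_nth[OF k])
  also have "\<dots> = (\<Prod>k\<in>insert k K. fps_geometric k :: 'a fps) $ n"
    by (simp only: prod.insert[OF insert(1,2)])
  finally show ?case
    using finite by blast
qed

lemma member_le_sum_mset: "x \<in># M \<Longrightarrow> x \<le> sum_mset (M :: nat multiset)"
  by (auto dest: multi_member_split)

lemma partitions_no_part_dvd_eq_partitions_in:
  "partitions_no_part_dvd l n = partitions_in {k\<in>{1..n}. \<not> l dvd k} n"
  unfolding partitions_no_part_dvd_def partitions_in_def
  by (intro Collect_cong) (auto dest: member_le_sum_mset)

lemma b_generating_function:
  "of_nat (b l n) = (\<Prod>k\<in>{k\<in>{1..n}. \<not> l dvd k}. fps_geometric k :: 'a::comm_semiring_1 fps) $ n"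
  unfolding b_def partitions_no_part_dvd_eq_partitions_in
  by (rule conjunct2[OF partitions_in_generating_function]) auto

section \<open>Gaussian binomial coefficients\<close>

text \<open>For \<open>k > L\<close> the truncated exponent \<open>L - k\<close> is harmless: \<open>gauss_binomial q L k = 0\<close> then.\<close>
fun gauss_binomial :: "'a::comm_ring_1 \<Rightarrow> nat \<Rightarrow> nat \<Rightarrow> 'a" where
  "gauss_binomial q 0 k = (if k = 0 then 1 else 0)"
| "gauss_binomial q (Suc L) 0 = 1"
| "gauss_binomial q (Suc L) (Suc k) = gauss_binomial q L (Suc k) + q ^ (L - k) * gauss_binomial q L k"

lemma gauss_binomial_0_right [simp]: "gauss_binomial q L 0 = 1"
  by (cases L) simp_all

lemma gauss_binomial_eq_0: "L < k \<Longrightarrow> gauss_binomial q L k = 0"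
proof (induction L arbitrary: k)
  case (Suc L)
  then show ?case by (cases k) simp_all
qed simp

lemma choose_two_Suc: "Suc k choose 2 = (k choose 2) + k"
  by (simp add: numeral_2_eq_2)

lemma q_binomial_theorem:
  fixes q x y :: "'a::comm_ring_1"
  shows "(\<Prod>j<L. y + x * q ^ j) =
    (\<Sum>k\<le>L. q ^ (k choose 2) * gauss_binomial q L k * x ^ k * y ^ (L - k))"
proof (induction L)
  case 0
  then show ?case by (simp add: numeral_2_eq_2)
next
  case (Suc L)
  define T where "T k = q ^ (k choose 2) * gauss_binomial q L k * x ^ k * y ^ (L - k)" for k
  have old_terms: "y ^ Suc L + (\<Sum>k\<le>L. q ^ (Suc k choose 2) * gauss_binomial q L (Suc k) * x ^ Suc k * y ^ (L - k))
      = (\<Sum>k\<le>L. T k) * y"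
  proof -
    have "y ^ Suc L + (\<Sum>k\<le>L. q ^ (Suc k choose 2) * gauss_binomial q L (Suc k) * x ^ Suc k * y ^ (L - k))
        = (\<Sum>k\<le>Suc L. q ^ (k choose 2) * gauss_binomial q L k * x ^ k * y ^ (Suc L - k))"
      by (subst sum.atMost_Suc_shift) (simp add: numeral_2_eq_2)
    also have "\<dots> = (\<Sum>k\<le>L. T k * y)"
      by (simp add: gauss_binomial_eq_0 T_def Suc_diff_le algebra_simps numeral_2_eq_2)
    finally show ?thesis
      by (simp add: sum_distrib_right)
  qed
  have new_terms: "(\<Sum>k\<le>L. q ^ (Suc k choose 2) * (q ^ (L - k) * gauss_binomial q L k) * x ^ Suc k * y ^ (L - k))
      = (\<Sum>k\<le>L. T k) * (x * q ^ L)"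
  proof -
    have "q ^ (Suc k choose 2) * q ^ (L - k) = q ^ (k choose 2) * q ^ L" if "k \<le> L" for k
      using that by (simp add: choose_two_Suc flip: power_add)
    then show ?thesis
      unfolding sum_distrib_right T_def
      by (intro sum.cong refl) (simp add: algebra_simps)
  qed
  have "(\<Sum>k\<le>Suc L. q ^ (k choose 2) * gauss_binomial q (Suc L) k * x ^ k * y ^ (Suc L - k))
      = y ^ Suc L + (\<Sum>k\<le>L. q ^ (Suc k choose 2) * gauss_binomial q L (Suc k) * x ^ Suc k * y ^ (L - k))
        + (\<Sum>k\<le>L. q ^ (Suc k choose 2) * (q ^ (L - k) * gauss_binomial q L k) * x ^ Suc k * y ^ (L - k))"
    by (subst sum.atMost_Suc_shift) (simp add: algebra_simps sum.distrib numeral_2_eq_2)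
  also have "\<dots> = (\<Sum>k\<le>L. T k) * (y + x * q ^ L)"
    by (simp only: old_terms new_terms distrib_left)
  also have "\<dots> = (\<Prod>j<Suc L. y + x * q ^ j)"
    using Suc.IH by (simp add: T_def)
  finally show ?case ..
qed

lemma gauss_binomial_mult_prod:
  fixes q :: "'a::comm_ring_1"
  shows "k \<le> L \<Longrightarrow>
    gauss_binomial q L k * (\<Prod>i\<in>{1..k}. 1 - q ^ i) = (\<Prod>i\<in>{L - k<..L}. 1 - q ^ i)"
proof (induction L arbitrary: k)
  case 0
  then show ?case by simp
next
  case (Suc L)
  show ?case
  proof (cases k)
    case 0
    then show ?thesis by simp
  next
    case (Suc k')
    have k': "k' \<le> L"
      using Suc.prems Suc by simp
    have lower: "(\<Prod>i\<in>{1..Suc k'}. 1 - q ^ i) = (\<Prod>i\<in>{1..k'}. 1 - q ^ i) * (1 - q ^ Suc k')"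
      by (simp add: atLeastAtMostSuc_conv mult.commute)
    have upper: "(\<Prod>i\<in>{Suc L - Suc k'<..Suc L}. 1 - q ^ i) = (\<Prod>i\<in>{L - k'<..L}. 1 - q ^ i) * (1 - q ^ Suc L)"
    proof -
      have "{Suc L - Suc k'<..Suc L} = insert (Suc L) {L - k'<..L}"
        using k' by auto
      then show ?thesis by (simp add: mult.commute)
    qed
    have IH: "gauss_binomial q L k' * (\<Prod>i\<in>{1..k'}. 1 - q ^ i) = (\<Prod>i\<in>{L - k'<..L}. 1 - q ^ i)"
      using Suc.IH k' by simp
    have IH': "gauss_binomial q L (Suc k') * (\<Prod>i\<in>{1..Suc k'}. 1 - q ^ i) =
        (1 - q ^ (L - k')) * (\<Prod>i\<in>{L - k'<..L}. 1 - q ^ i)"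
    proof (cases "k' = L")
      case True
      then show ?thesis
        by (simp add: gauss_binomial_eq_0)
    next
      case False
      then have "{L - Suc k'<..L} = insert (L - k') {L - k'<..L}"
        using k' by auto
      then show ?thesis
        using Suc.IH[of "Suc k'"] False k' by simp
    qed
    have "L - k' + Suc k' = Suc L"
      using k' by simp
    then have "q ^ (L - k') * q ^ Suc k' = q ^ Suc L"
      by (metis power_add)
    then have "(1 - q ^ (L - k')) + q ^ (L - k') * (1 - q ^ Suc k') = 1 - q ^ Suc L"
      by (simp add: algebra_simps)
    moreover have "gauss_binomial q (Suc L) k * (\<Prod>i\<in>{1..k}. 1 - q ^ i)
        = gauss_binomial q L (Suc k') * (\<Prod>i\<in>{1..Suc k'}. 1 - q ^ i)
          + q ^ (L - k') * (gauss_binomial q L k' * (\<Prod>i\<in>{1..k'}. 1 - q ^ i)) * (1 - q ^ Suc k')"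
      using Suc lower by (simp add: algebra_simps)
    ultimately show ?thesis
      unfolding IH IH' upper Suc by (simp add: algebra_simps)
  qed
qed

section \<open>A finite Jacobi triple product\<close>

text \<open>\<open>8 (2m\<^sup>2 - m) + 1 = (4m - 1)\<^sup>2\<close>, so these exponents are exactly the triangular numbers.\<close>
definition jacobi_exponent :: "int \<Rightarrow> nat" where
  "jacobi_exponent m = nat (2 * m\<^sup>2 - m)"

lemma of_nat_jacobi_exponent: "int (jacobi_exponent m) = 2 * m\<^sup>2 - m"
proof -
  have "0 \<le> m * (2 * m - 1)"
    by (cases "m \<ge> 1") (simp_all add: zero_le_mult_iff)
  then show ?thesis
    unfolding jacobi_exponent_def by (simp add: power2_eq_square algebra_simps)
qed

lemma square_of_jacobi_exponent: "8 * int (jacobi_exponent m) + 1 = (4 * m - 1)\<^sup>2"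
  by (simp add: of_nat_jacobi_exponent power2_eq_square algebra_simps)

lemma two_mult_choose_two: "2 * (k choose 2) = k * (k - 1)"
proof (induction k)
  case 0
  then show ?case by (simp add: numeral_2_eq_2)
next
  case (Suc k)
  then show ?case by (cases k) (simp_all add: choose_two_Suc algebra_simps)
qed

lemma jacobi_exponent_shift:
  assumes "k \<le> 2 * M"
  shows "4 * (k choose 2) + k + 4 * M * (2 * M - k) + M = 6 * M * M + jacobi_exponent (int k - int M)"
proof -
  have choose: "int (4 * (k choose 2)) = 2 * int k * (int k - 1)"
  proof -
    have "int (4 * (k choose 2)) = 2 * int (2 * (k choose 2))"
      by simp
    also have "2 * (k choose 2) = k * (k - 1)"
      by (rule two_mult_choose_two)
    also have "int (k * (k - 1)) = int k * (int k - 1)"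
      by (cases k) (simp_all add: algebra_simps)
    finally show ?thesis
      by simp
  qed
  have diff: "int (4 * M * (2 * M - k)) = 4 * int M * (2 * int M - int k)"
    using assms by (simp add: of_nat_diff)
  have "int (4 * (k choose 2) + k + 4 * M * (2 * M - k) + M) =
      int (6 * M * M + jacobi_exponent (int k - int M))"
    unfolding of_nat_add choose diff of_nat_jacobi_exponent
    by (simp add: power2_eq_square algebra_simps)
  then show ?thesis
    by (simp only: of_nat_eq_iff)
qed

lemma prod_lessThan_add:
  fixes m n :: nat
  shows "(\<Prod>j<m + n. g j) = (\<Prod>j<m. g j) * (\<Prod>j<n. g (m + j))"
  by (induction n) (simp_all add: mult.assoc)

lemma odd_below_mult_4:
  fixes M :: nat
  shows "{k. odd k \<and> k < 4 * M} = (\<lambda>j. 4 * j + 1) ` {..<M} \<union> (\<lambda>j. 4 * j + 3) ` {..<M}"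
proof (intro set_eqI iffI)
  fix k assume k: "k \<in> {k. odd k \<and> k < 4 * M}"
  then have "k = 4 * (k div 4) + 1 \<or> k = 4 * (k div 4) + 3" "k div 4 < M"
    by auto presburger
  then show "k \<in> (\<lambda>j. 4 * j + 1) ` {..<M} \<union> (\<lambda>j. 4 * j + 3) ` {..<M}"
    by blast
qed auto

lemma distinct_parts_fps_odd_below_mult_4:
  "distinct_parts_fps {k. odd k \<and> k < 4 * M} =
     (\<Prod>j<M. 1 + fps_X ^ (4 * j + 1)) * (\<Prod>j<M. 1 + fps_X ^ (4 * j + 3) :: 'a::comm_ring_1 fps)"
proof -
  have "(\<lambda>j. 4 * j + 1) ` {..<M} \<inter> (\<lambda>j. 4 * j + 3) ` {..<M} = {}"
    by auto presburger
  moreover have "inj_on (\<lambda>j. 4 * j + 1) {..<M}" "inj_on (\<lambda>j. 4 * j + 3) {..<M}"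
    by (auto simp: inj_on_def)
  ultimately show ?thesis
    by (simp only: odd_below_mult_4 distinct_parts_fps_def prod.union_disjoint finite_imageI
        finite_lessThan prod.reindex o_def)
qed

lemma jacobi_factors_product:
  "fps_X ^ M * (\<Prod>j<2 * M. fps_X ^ (4 * M) + fps_X * (fps_X ^ 4) ^ j) =
     fps_X ^ (6 * M * M) * (distinct_parts_fps {k. odd k \<and> k < 4 * M} :: 'a::comm_ring_1 fps)"
proof -
  define f :: "nat \<Rightarrow> 'a fps" where "f j = fps_X ^ (4 * M) + fps_X * (fps_X ^ 4) ^ j" for j
  have high: "f (M + j) = fps_X ^ (4 * M) * (1 + fps_X ^ (4 * j + 1))" for j
    unfolding f_def by (simp add: algebra_simps power_add power_mult[symmetric])
  have low: "f j = fps_X ^ (4 * j + 1) * (1 + fps_X ^ (4 * (M - Suc j) + 3))" if "j < M" for j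
  proof -
    have "4 * j + 1 + (4 * (M - Suc j) + 3) = 4 * M"
      using that by simp
    then have "fps_X ^ (4 * j + 1) * fps_X ^ (4 * (M - Suc j) + 3) = (fps_X ^ (4 * M) :: 'a fps)"
      by (metis power_add)
    then show ?thesis
      unfolding f_def by (simp add: algebra_simps power_add power_mult[symmetric])
  qed
  have "(\<Sum>j<M. 4 * j + 1) + M = 2 * M * M"
    by (induction M) (simp_all add: algebra_simps)
  then have shift: "fps_X ^ M * (\<Prod>j<M. fps_X ^ (4 * j + 1)) = (fps_X ^ (2 * M * M) :: 'a fps)"
    by (metis power_sum power_add mult.commute)
  have "(\<Prod>j<2 * M. f j) = (\<Prod>j<M. f j) * (\<Prod>j<M. f (M + j))"
    by (simp only: mult_2 prod_lessThan_add)
  also have "(\<Prod>j<M. f (M + j)) = fps_X ^ (4 * M * M) * (\<Prod>j<M. 1 + fps_X ^ (4 * j + 1))"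
    by (simp add: high prod.distrib power_mult)
  also have "(\<Prod>j<M. f j) = (\<Prod>j<M. fps_X ^ (4 * j + 1)) * (\<Prod>j<M. 1 + fps_X ^ (4 * j + 3))"
    by (simp add: low prod.distrib prod.nat_diff_reindex[of "\<lambda>j. 1 + fps_X ^ (4 * j + 3)"])
  finally have "fps_X ^ M * (\<Prod>j<2 * M. f j) = (fps_X ^ M * (\<Prod>j<M. fps_X ^ (4 * j + 1))) *
      fps_X ^ (4 * M * M) * distinct_parts_fps {k. odd k \<and> k < 4 * M}"
    unfolding distinct_parts_fps_odd_below_mult_4 by (simp only: mult_ac)
  also have "\<dots> = fps_X ^ (2 * M * M + 4 * M * M) * distinct_parts_fps {k. odd k \<and> k < 4 * M}"
    by (simp only: shift) (simp only: power_add)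
  finally show ?thesis
    unfolding f_def by (simp add: algebra_simps)
qed

lemma distinct_parts_fps_odd_expansion:
  "distinct_parts_fps {k. odd k \<and> k < 4 * M} =
     (\<Sum>k\<le>2 * M. fps_X ^ jacobi_exponent (int k - int M) *
        gauss_binomial (fps_X ^ 4) (2 * M) k :: 'a::comm_ring_1 fps)"
proof (rule fps_X_power_mult_left_cancel[where a = "6 * M * M"])
  have "fps_X ^ (6 * M * M) * distinct_parts_fps {k. odd k \<and> k < 4 * M} =
      fps_X ^ M * (\<Prod>j<2 * M. fps_X ^ (4 * M) + fps_X * (fps_X ^ 4) ^ j :: 'a fps)"
    by (rule jacobi_factors_product[symmetric])
  also have "(\<Prod>j<2 * M. fps_X ^ (4 * M) + fps_X * (fps_X ^ 4) ^ j :: 'a fps) =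
      (\<Sum>k\<le>2 * M. (fps_X ^ 4) ^ (k choose 2) * gauss_binomial (fps_X ^ 4) (2 * M) k *
        fps_X ^ k * (fps_X ^ (4 * M)) ^ (2 * M - k))"
    by (rule q_binomial_theorem)
  also have "fps_X ^ M * (\<Sum>k\<le>2 * M. (fps_X ^ 4) ^ (k choose 2) * gauss_binomial (fps_X ^ 4) (2 * M) k *
        fps_X ^ k * (fps_X ^ (4 * M)) ^ (2 * M - k)) =
      (\<Sum>k\<le>2 * M. fps_X ^ (6 * M * M) * (fps_X ^ jacobi_exponent (int k - int M) *
        gauss_binomial (fps_X ^ 4) (2 * M) k :: 'a fps))"
    unfolding sum_distrib_left
  proof (intro sum.cong refl)
    fix k assume "k \<in> {..2 * M}"
    then have exponent: "4 * (k choose 2) + k + 4 * M * (2 * M - k) + M =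
        6 * M * M + jacobi_exponent (int k - int M)"
      by (intro jacobi_exponent_shift) simp
    then have "fps_X ^ M * ((fps_X ^ 4) ^ (k choose 2) * gauss_binomial (fps_X ^ 4) (2 * M) k *
        fps_X ^ k * (fps_X ^ (4 * M)) ^ (2 * M - k)) =
        fps_X ^ (6 * M * M + jacobi_exponent (int k - int M)) * (gauss_binomial (fps_X ^ 4) (2 * M) k :: 'a fps)"
      by (simp only: power_add power_mult[symmetric] flip: exponent) (simp only: mult_ac)
    then show "fps_X ^ M * ((fps_X ^ 4) ^ (k choose 2) * gauss_binomial (fps_X ^ 4) (2 * M) k *
        fps_X ^ k * (fps_X ^ (4 * M)) ^ (2 * M - k)) = fps_X ^ (6 * M * M) *
        (fps_X ^ jacobi_exponent (int k - int M) * gauss_binomial (fps_X ^ 4) (2 * M) k :: 'a fps)"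
      by (simp only: power_add mult_ac)
  qed
  finally show "fps_X ^ (6 * M * M) * distinct_parts_fps {k. odd k \<and> k < 4 * M} =
      fps_X ^ (6 * M * M) * (\<Sum>k\<le>2 * M. fps_X ^ jacobi_exponent (int k - int M) *
        gauss_binomial (fps_X ^ 4) (2 * M) k :: 'a fps)"
    by (simp add: sum_distrib_left)
qed

section \<open>The parity of b 4\<close>

lemma abs_le_jacobi_exponent: "\<bar>m\<bar> \<le> int (jacobi_exponent m)"
proof (cases "m \<ge> 0")
  case True
  then have "m \<le> m * m \<or> m = 0"
    by (metis mult_le_cancel_right1 not_less zero_less_iff_neq_zero int_one_le_iff_zero_less)
  then show ?thesis
    using True by (auto simp: of_nat_jacobi_exponent power2_eq_square)
next
  case False
  then show ?thesis
    by (simp add: of_nat_jacobi_exponent power2_eq_square)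
qed

lemma gauss_binomial_mult_prod_cong_one:
  assumes "jacobi_exponent (int k - int M) \<le> n" "2 * n \<le> M" "k \<le> 2 * M"
  shows "fps_cong n (gauss_binomial (fps_X ^ 4) (2 * M) k * (\<Prod>i\<in>{1..n}. 1 - fps_X ^ (4 * i)))
    (1 :: 'a::comm_ring_1 fps)"
proof -
  have "\<bar>int k - int M\<bar> \<le> int n"
    using abs_le_jacobi_exponent[of "int k - int M"] assms(1) by linarith
  then have "n \<le> k" "n \<le> 2 * M - k"
    using assms(2,3) by auto
  then have low: "fps_cong n (\<Prod>i\<in>{1..k}. 1 - fps_X ^ (4 * i)) (\<Prod>i\<in>{1..n}. 1 - fps_X ^ (4 * i) :: 'a fps)"
    and high: "fps_cong n (\<Prod>i\<in>{2 * M - k<..2 * M}. 1 - fps_X ^ (4 * i)) (\<Prod>i\<in>{}. 1 - fps_X ^ (4 * i) :: 'a fps)"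
    by (intro fps_cong_prod_subset fps_cong_one_minus_X_power; force)+
  have "fps_cong n (gauss_binomial (fps_X ^ 4) (2 * M) k * (\<Prod>i\<in>{1..n}. 1 - fps_X ^ (4 * i)))
      (gauss_binomial (fps_X ^ 4) (2 * M) k * (\<Prod>i\<in>{1..k}. 1 - (fps_X ^ 4) ^ i :: 'a fps))"
    using fps_cong_mult[OF fps_cong_refl fps_cong_sym[OF low]] by (simp add: power_mult)
  also have "gauss_binomial (fps_X ^ 4) (2 * M) k * (\<Prod>i\<in>{1..k}. 1 - (fps_X ^ 4) ^ i :: 'a fps) =
      (\<Prod>i\<in>{2 * M - k<..2 * M}. 1 - fps_X ^ (4 * i))"
    using gauss_binomial_mult_prod assms(3) by (simp add: power_mult)
  finally show ?thesis
    using high fps_cong_trans by simp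
qed

lemma jacobi_product_nth_eq_0:
  assumes "2 * n \<le> M" "\<And>m. jacobi_exponent m \<noteq> n"
  shows "(distinct_parts_fps {k. odd k \<and> k < 4 * M} * (\<Prod>i\<in>{1..n}. 1 - fps_X ^ (4 * i))) $ n =
    (0 :: 'a::comm_ring_1)"
proof -
  \<comment> \<open>A summand \<open>X\<^sup>e ?G k\<close> with \<open>e \<le> n\<close> has \<open>?G k \<equiv> 1\<close>, so its coefficient at \<open>n \<noteq> e\<close> vanishes.\<close>
  let ?G = "\<lambda>k. gauss_binomial (fps_X ^ 4) (2 * M) k * (\<Prod>i\<in>{1..n}. 1 - fps_X ^ (4 * i)) :: 'a fps"
  have "(fps_X ^ jacobi_exponent (int k - int M) * ?G k) $ n = 0" if "k \<le> 2 * M" for k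
  proof (cases "n < jacobi_exponent (int k - int M)")
    case False
    then have "?G k $ (n - jacobi_exponent (int k - int M)) = (1 :: 'a fps) $ (n - jacobi_exponent (int k - int M))"
      using assms that by (intro fps_cong_nth[OF gauss_binomial_mult_prod_cong_one]) auto
    then show ?thesis
      using False assms(2)[of "int k - int M"] by (simp add: fps_X_power_mult_nth)
  qed (simp add: fps_X_power_mult_nth)
  then show ?thesis
    unfolding distinct_parts_fps_odd_expansion
    by (simp add: sum_distrib_right mult.assoc fps_sum_nth)
qed

lemma fps_geometric_prod_mult_distinct_parts_fps_bit:
  "finite K \<Longrightarrow> 0 \<notin> K \<Longrightarrow> (\<Prod>k\<in>K. fps_geometric k) * distinct_parts_fps K = (1 :: bit fps)"
  unfolding distinct_parts_fps_def prod.distrib[symmetric]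
  by (intro prod.neutral ballI)
    (metis bit_fps_diff fps_geometric_times_one_minus_X_power neq0_conv)

lemma distinct_parts_fps_odd_mult_all_cong_one_bit:
  "fps_cong n (distinct_parts_fps {k\<in>{1..n}. odd k} * distinct_parts_fps {1..n}) (1 :: bit fps)"
proof -
  \<comment> \<open>With \<open>D = O E\<close> split into odd and even parts, \<open>D\<^sup>2 \<equiv> E\<close>; cancel the unit \<open>E\<close> from \<open>O D E \<equiv> E\<close>.\<close>
  let ?E = "distinct_parts_fps {k\<in>{1..n}. even k} :: bit fps"
  have split: "distinct_parts_fps {1..n} = distinct_parts_fps {k\<in>{1..n}. odd k} * ?E"
    by (subst distinct_parts_fps_union[symmetric]) (auto intro: arg_cong[where f = distinct_parts_fps])
  have "fps_cong n (distinct_parts_fps {1..n} * distinct_parts_fps {1..n}) ?E"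
    unfolding distinct_parts_fps_square_bit
    by (rule distinct_parts_fps_cong_subset) (auto elim!: evenE)
  moreover have "(distinct_parts_fps {k\<in>{1..n}. odd k} * distinct_parts_fps {1..n}) * ?E =
      distinct_parts_fps {1..n} * distinct_parts_fps {1..n}"
    by (simp only: split mult_ac)
  ultimately have "fps_cong n ((distinct_parts_fps {k\<in>{1..n}. odd k} * distinct_parts_fps {1..n}) * ?E) (1 * ?E)"
    by (simp only: mult_1_left)
  then show ?thesis
    by (rule fps_cong_mult_cancel_right) (simp add: distinct_parts_fps_nth_0)
qed

lemma b4_generating_function_cong_bit:
  assumes "n < 4 * M"
  shows "fps_cong n (\<Prod>k\<in>{k\<in>{1..n}. \<not> 4 dvd k}. fps_geometric k)
    (distinct_parts_fps {k. odd k \<and> k < 4 * M} * (\<Prod>i\<in>{1..n}. 1 - fps_X ^ (4 * i)) :: bit fps)"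
proof -
  let ?K = "{k\<in>{1..n}. \<not> 4 dvd k}" and ?D = "distinct_parts_fps {1..n} :: bit fps"
  let ?Q = "\<Prod>i\<in>{1..n}. 1 - fps_X ^ (4 * i) :: bit fps"
  let ?O = "distinct_parts_fps {k. odd k \<and> k < 4 * M} :: bit fps"
  let ?On = "distinct_parts_fps {k\<in>{1..n}. odd k} :: bit fps"
  \<comment> \<open>\<open>distinct_parts_fps ?K * ?Q \<equiv> ?D\<close>, which \<open>?O \<equiv> ?On\<close> inverts; the geometric product
    inverts \<open>distinct_parts_fps ?K\<close>.\<close>
  have "?Q = distinct_parts_fps ((*) 4 ` {1..n})"
    by (simp add: distinct_parts_fps_def bit_fps_diff prod.reindex inj_on_def)
  also have "fps_cong n \<dots> (distinct_parts_fps {k\<in>{1..n}. 4 dvd k})"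
    by (rule distinct_parts_fps_cong_subset) auto
  finally have "fps_cong n (distinct_parts_fps ?K * ?Q)
      (distinct_parts_fps ?K * distinct_parts_fps {k\<in>{1..n}. 4 dvd k})"
    by (rule fps_cong_mult[OF fps_cong_refl])
  also have "distinct_parts_fps ?K * distinct_parts_fps {k\<in>{1..n}. 4 dvd k} = ?D"
    by (subst distinct_parts_fps_union[symmetric]) (auto intro: arg_cong[where f = distinct_parts_fps])
  finally have "fps_cong n ((distinct_parts_fps ?K * ?Q) * ?O) (?D * ?On)"
    by (rule fps_cong_mult) (rule distinct_parts_fps_cong_subset, use assms in \<open>auto dest: odd_pos\<close>)
  then have "fps_cong n (distinct_parts_fps ?K * (?O * ?Q)) 1"
    using distinct_parts_fps_odd_mult_all_cong_one_bit[of n] fps_cong_trans by (simp add: mult_ac)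
  then have "fps_cong n ((\<Prod>k\<in>?K. fps_geometric k) * (distinct_parts_fps ?K * (?O * ?Q)))
      ((\<Prod>k\<in>?K. fps_geometric k) * 1)"
    by (rule fps_cong_mult[OF fps_cong_refl])
  then show ?thesis
    by (simp add: fps_geometric_prod_mult_distinct_parts_fps_bit fps_cong_sym flip: mult.assoc)
qed

lemma even_b4_if_not_square:
  assumes "\<And>s :: nat. s\<^sup>2 \<noteq> 8 * n + 1"
  shows "even (b 4 n)"
proof -
  have not_jacobi: "jacobi_exponent m \<noteq> n" for m
  proof
    assume "jacobi_exponent m = n"
    then have "int (8 * n + 1) = int ((nat \<bar>4 * m - 1\<bar>)\<^sup>2)"
      using square_of_jacobi_exponent[of m] by simp
    with assms show False
      by (simp only: of_nat_eq_iff) metis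
  qed
  have "(of_nat (b 4 n) :: bit) =
      (distinct_parts_fps {k. odd k \<and> k < 4 * (2 * n + 1)} * (\<Prod>i\<in>{1..n}. 1 - fps_X ^ (4 * i))) $ n"
    unfolding b_generating_function by (rule fps_cong_nth[OF b4_generating_function_cong_bit]) auto
  also have "\<dots> = 0"
    using not_jacobi by (intro jacobi_product_nth_eq_0) auto
  finally show ?thesis
    by (metis even_of_nat even_zero)
qed

lemma prime_power_odd_mult_not_square:
  fixes p a u s :: nat
  assumes "prime p" "\<not> p dvd u" "odd a"
  shows "s\<^sup>2 \<noteq> p ^ a * u"
proof
  assume square: "s\<^sup>2 = p ^ a * u"
  have "0 < u"
    using assms(2) by (metis dvd_0_right gr0I)
  have "prime_elem p"
    using assms(1) by simp
  have "s \<noteq> 0"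
    using square \<open>0 < u\<close> prime_gt_0_nat[OF assms(1)] by (intro notI) simp
  have "multiplicity p (s\<^sup>2) = 2 * multiplicity p s"
    using prime_elem_multiplicity_power_distrib[OF \<open>prime_elem p\<close> \<open>s \<noteq> 0\<close>] by simp
  moreover have "multiplicity p (p ^ a * u) = a"
    using \<open>0 < u\<close> \<open>prime_elem p\<close> assms(1,2)
    by (simp add: prime_elem_multiplicity_mult_distrib prime_gt_0_nat not_dvd_imp_multiplicity_0)
  ultimately show False
    using square assms(3) by simp
qed

section \<open>The arguments of the theorem\<close>

lemma odd_square_mod_8: "odd (p :: nat) \<Longrightarrow> p\<^sup>2 mod 8 = 1"
proof -
  assume "odd p"
  then have "p mod 8 = 1 \<or> p mod 8 = 3 \<or> p mod 8 = 5 \<or> p mod 8 = 7"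
    by presburger
  moreover have "p\<^sup>2 mod 8 = (p mod 8)\<^sup>2 mod 8"
    by (simp add: power_mod)
  ultimately show ?thesis
    by auto
qed

lemma odd_even_power_mod_8:
  fixes p :: nat
  assumes "odd p"
  shows "p ^ (2 * \<alpha>) mod 8 = 1"
proof -
  have "p ^ (2 * \<alpha>) mod 8 = (p\<^sup>2 mod 8) ^ \<alpha> mod 8"
    by (simp add: power_mult power_mod)
  then show ?thesis
    using odd_square_mod_8[OF assms] by simp
qed

lemma argument_times_8_plus_1:
  fixes p \<alpha> n i :: nat
  assumes "odd p" "1 \<le> \<alpha>"
  shows "8 * (p ^ (2 * \<alpha>) * n + ((8 * i + p) * p ^ (2 * \<alpha> - 1) - 1) div 8) + 1 =
    p ^ (2 * \<alpha> - 1) * (8 * p * n + 8 * i + p)"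
proof -
  define t where "t = p ^ (2 * \<alpha>) div 8"
  have t: "p ^ (2 * \<alpha>) = 8 * t + 1"
    using div_mult_mod_eq[of "p ^ (2 * \<alpha>)" 8] odd_even_power_mod_8[OF assms(1)]
    unfolding t_def by simp
  have p_power: "p ^ (2 * \<alpha>) = p * p ^ (2 * \<alpha> - 1)"
    using assms(2) by (cases \<alpha>) simp_all
  have "(8 * i + p) * p ^ (2 * \<alpha> - 1) - 1 = 8 * (i * p ^ (2 * \<alpha> - 1) + t)"
    using t p_power by (simp add: algebra_simps)
  then show ?thesis
    using t p_power by (simp add: algebra_simps)
qed

lemma prime_not_dvd_8_mult_add:
  fixes p n i :: nat
  assumes "prime p" "odd p" "1 \<le> i" "i \<le> p - 1"
  shows "\<not> p dvd 8 * p * n + 8 * i + p"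
proof
  assume "p dvd 8 * p * n + 8 * i + p"
  moreover have "8 * p * n + 8 * i + p = (8 * p * n + p) + 8 * i"
    by simp
  moreover have "p dvd 8 * p * n + p"
    by simp
  ultimately have "p dvd 8 * i"
    by (simp add: dvd_add_right_iff)
  moreover have "\<not> p dvd i"
    using assms(3,4) by (auto dest: dvd_imp_le)
  moreover have "\<not> p dvd 8"
  proof
    assume "p dvd 8"
    then have "p dvd 2"
      using prime_dvd_power[OF assms(1), of 2 3] by simp
    then have "p \<le> 2"
      by (auto dest: dvd_imp_le)
    with assms(1,2) show False
      using prime_gt_1_nat[OF assms(1)] by (cases "p = 2") auto
  qed
  ultimately show False
    using prime_dvd_multD[OF assms(1)] by blast
qed

theorem theorem3p10:
  fixes p \<alpha> n i :: nat
  assumes "prime p" and "odd p" and "1 \<le> \<alpha>" and "1 \<le> i" and "i \<le> p - 1"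
  shows "even (b 4 (p ^ (2 * \<alpha>) * n + ((8 * i + p) * p ^ (2 * \<alpha> - 1) - 1) div 8))"
proof (rule even_b4_if_not_square)
  fix s :: nat
  have "odd (2 * \<alpha> - 1)"
    using assms(3) by presburger
  then show "s\<^sup>2 \<noteq> 8 * (p ^ (2 * \<alpha>) * n + ((8 * i + p) * p ^ (2 * \<alpha> - 1) - 1) div 8) + 1"
    unfolding argument_times_8_plus_1[OF assms(2,3)]
    using prime_power_odd_mult_not_square[OF assms(1) prime_not_dvd_8_mult_add[OF assms(1,2,4,5)]]
    by blast
qed

end
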